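(* In the DID setting of the context with $N_1\ge1$ fixed, suppose Assumptions 1 and 2 hold. Consider testing $H_0:\alpha=\alpha_0$ at significance level $\tau$ by rejecting when $\widehat\alpha-\alpha_0$ is below the $\tau/2$-quantile or above the $1-\tau/2$-quantile of $\widehat F$. Then, as $N_0\to\infty$, this test is asymptotically of level $\tau$ (the limiting rejection probability under $H_0$ is at most $\tau$), for every $\tau\in(0,1)$.
   Context: Units $i\in\mathcal I_1$ (treated, $|\mathcal I_1|=N_1$) and $i\in\mathcal I_0$ (control, $|\mathcal I_0|=N_0$), periods $t=1,\dots,T$; $\mathcal T_0=\{1,\dots,t^\ast\}$, $\mathcal T_1=\{t^\ast+1,\dots,T\}$, $T$ fixed. Potential outcomes: $Y_{it}(0)=\theta_i+\gamma_t+\eta_{it}$, $Y_{it}(1)=\alpha_{it}+Y_{it}(0)$; observed $Y_{it}=Y_{it}(1)$ if $i\in\mathcal I_1,t\in\mathcal T_1$, else $Y_{it}(0)$. The $\alpha_{it}$ are fixed and $\alpha=\frac{1}{N_1}\frac{1}{T-t^\ast}\sum_{i\in\mathcal I_1}\sum_{t\in\mathcal T_1}\alpha_{it}$. For a sequence $A_t$, $\nabla A=\frac{1}{T-t^\ast}\sum_{t\in\mathcal T_1}A_t-\frac{1}{t^\ast}\sum_{t\in\mathcal T_0}A_t$; $W_i=\nabla\eta_{i\cdot}$. $\widehat\alpha=\frac{1}{N_1}\sum_{i\in\mathcal I_1}\nabla Y_i-\frac{1}{N_0}\sum_{i\in\mathcal I_0}\nabla Y_i$; control residuals $\widehat W_i=\nabla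 Y_i-\frac1{N_0}\sum_{j\in\mathcal I_0}\nabla Y_j$; $\widehat F(c)=N_0^{-1}\sum_{i\in\mathcal I_0}\mathbbm 1\{\widehat W_i\le c\}$. Treatment assignment is fixed. Assumption 1: (i) $\mathbb E[W_i]=0$ for all $i$; (ii) all $W_i$ have the same marginal distribution, with continuous cdf $F$ and finite second moment; (iii) as $N_0\to\infty$, $\frac1{N_0}\sum_{i\in\mathcal I_0}W_i\xrightarrow{p}0$ and $\frac1{N_0}\sum_{i\in\mathcal I_0}\mathbbm 1\{W_i\le c\}\xrightarrow{p}F(c)$ for each $c$. The errors of the treated units may be arbitrarily correlated with each other. Assumption 2: for every $\tau\in(0,1)$, letting $c_\tau$ denote the $\tau$-quantile of $F$ and $\widetilde W=N_1^{-1}\sum_{i\in\mathcal I_1}W_i$, one has $\Pr(\{\widetilde W\le c_{\tau/2}\}\cup\{\widetilde W>c_{1-\tau/2}\})\le\tau$. *)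

theory Defs
  imports "HOL-Probability.Probability"
begin

definition nabla :: "nat \<Rightarrow> nat \<Rightarrow> (nat \<Rightarrow> real) \<Rightarrow> real" where
  "nabla tstar T A =
     (\<Sum>t\<in>{tstar<..T}. A t) / real (T - tstar) - (\<Sum>t\<in>{1..tstar}. A t) / real tstar"

definition quantile :: "(real \<Rightarrow> real) \<Rightarrow> real \<Rightarrow> real" where
  "quantile G p = Inf {c. p \<le> G c}"

definition conv_prob :: "'a measure \<Rightarrow> (nat \<Rightarrow> 'a \<Rightarrow> real) \<Rightarrow> real \<Rightarrow> bool" where
  "conv_prob M X L \<longleftrightarrow>
     (\<forall>e>0. (\<lambda>n. measure M {\<omega>\<in>space M. \<bar>X n \<omega> - L\<bar> > e}) \<longlonglongrightarrow> 0)"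

end

theory Submission
  imports Defs
begin

text \<open>Under the null the unit and time effects difference out: \<open>alpha_hat - alpha0\<close> is the
  treated average error \<open>Z\<close> minus the control average error \<open>S\<close>, and the control
  residuals are the control errors minus \<open>S\<close>. The common shift \<open>S\<close> moves the statistic
  and the empirical cdf \<open>F_hat\<close> alike, so it cancels: the test rejects exactly when \<open>Z\<close>
  lies outside the \<open>\<tau>/2\<close> and \<open>1 - \<tau>/2\<close> quantiles of the uncentred empirical cdf of
  the control errors. That cdf converges to \<open>F\<close> pointwise in probability, and continuity
  of \<open>F\<close> gives \<open>F (quantile F p) = p\<close>; so for every \<open>\<tau>' > \<tau>\<close>, with probability
  tending to one its quantiles lie beyond \<open>quantile F (\<tau>'/2)\<close> and
  \<open>quantile F (1 - \<tau>'/2)\<close>, and Assumption 2 at level \<open>\<tau>'\<close> bounds the limiting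
  rejection probability by \<open>\<tau>'\<close>.\<close>

lemma nabla_add: "nabla s T (\<lambda>t. f t + g t) = nabla s T f + nabla s T g"
  by (simp add: nabla_def sum.distrib add_divide_distrib)

lemma nabla_const:
  assumes "1 \<le> s" "s < T"
  shows "nabla s T (\<lambda>t. c) = 0"
  using assms by (simp add: nabla_def)

lemma nabla_post_period_effect:
  "nabla s T (\<lambda>t. if t \<in> {s<..T} then a t else 0) = (\<Sum>t\<in>{s<..T}. a t) / real (T - s)"
proof -
  have "(\<Sum>t\<in>{1..s}. if t \<in> {s<..T} then a t else 0) = 0"
    by (intro sum.neutral) auto
  then show ?thesis by (simp add: nabla_def)
qed

lemma nabla_did_outcome:
  assumes "1 \<le> s" "s < T"
  shows "nabla s T (\<lambda>t. (if P \<and> t \<in> {s<..T} then a t else 0) + b + g t + e t)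
       = (if P then (\<Sum>t\<in>{s<..T}. a t) / real (T - s) else 0) + nabla s T g + nabla s T e"
  using nabla_const[OF assms] nabla_post_period_effect[of s T a] by (simp add: nabla_add)

lemma borel_measurable_nabla:
  assumes "s \<le> T" and "\<And>t. t \<in> {1..T} \<Longrightarrow> f t \<in> borel_measurable M"
  shows "(\<lambda>\<omega>. nabla s T (\<lambda>t. f t \<omega>)) \<in> borel_measurable M"
  unfolding nabla_def using assms
  by (intro borel_measurable_diff borel_measurable_divide borel_measurable_sum borel_measurable_const)
     auto

lemma quantile_continuous_cdf:
  assumes "real_distribution \<mu>" and cont: "continuous_on UNIV (cdf \<mu>)" and q: "0 < q" "q < 1"
  shows "cdf \<mu> (quantile (cdf \<mu>) q) = q"
proof -
  interpret real_distribution \<mu> by (rule assms(1))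
  define S where "S = {c. q \<le> cdf \<mu> c}"
  have "eventually (\<lambda>c. q < cdf \<mu> c) at_top"
    using cdf_lim_at_top_prob q by (simp add: order_tendstoD)
  then obtain c1 where "q < cdf \<mu> c1" by (auto simp: eventually_at_top_linorder)
  hence "S \<noteq> {}" by (auto simp: S_def intro: less_imp_le)
  have "eventually (\<lambda>c. cdf \<mu> c < q) at_bot"
    using cdf_lim_at_bot q by (simp add: order_tendstoD)
  then obtain c0 where c0: "\<And>c. c \<le> c0 \<Longrightarrow> cdf \<mu> c < q" by (auto simp: eventually_at_bot_linorder)
  have "bdd_below S"
  proof (rule bdd_belowI)
    show "c0 \<le> c" if "c \<in> S" for c
      using that c0[of c] by (cases "c \<le> c0") (auto simp: S_def)
  qed
  have "closed S" unfolding S_def by (intro closed_Collect_le continuous_on_const cont)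
  have "Inf S \<in> S" by (rule closed_contains_Inf) fact+
  moreover have "cdf \<mu> (Inf S) \<le> q"
  proof (rule LIMSEQ_le_const2)
    have "(\<lambda>n. Inf S - 1 / Suc n) \<longlonglongrightarrow> Inf S"
      using tendsto_diff[OF tendsto_const LIMSEQ_inverse_real_of_nat] by (simp add: inverse_eq_divide)
    then show "(\<lambda>n. cdf \<mu> (Inf S - 1 / Suc n)) \<longlonglongrightarrow> cdf \<mu> (Inf S)"
      using cont by (intro isCont_tendsto_compose[where g = "cdf \<mu>"]) (auto simp: continuous_on_eq_continuous_at)
    have "Inf S - 1 / Suc n \<notin> S" for n
      using cInf_lower[OF _ \<open>bdd_below S\<close>, of "Inf S - 1 / Suc n"] by force
    then show "\<exists>N. \<forall>n\<ge>N. cdf \<mu> (Inf S - 1 / Suc n) \<le> q"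
      unfolding S_def by (auto intro: less_imp_le simp: not_le)
  qed
  ultimately show ?thesis by (simp add: quantile_def S_def)
qed

lemma quantile_le:
  assumes "bdd_below {c. p \<le> G c}" and "p \<le> G x"
  shows "quantile G p \<le> x"
  unfolding quantile_def using assms by (intro cInf_lower) auto

lemma quantile_ge:
  assumes "mono G" and "p \<le> G c" and "G y < p"
  shows "y \<le> quantile G p"
  unfolding quantile_def
proof (rule cInf_greatest)
  show "{c. p \<le> G c} \<noteq> {}" using assms(2) by blast
  show "y \<le> c'" if "c' \<in> {c. p \<le> G c}" for c'
    using that assms(3) monoD[OF assms(1), of c' y] by (cases "y \<le> c'") auto
qed

definition ecdf :: "nat \<Rightarrow> (nat \<Rightarrow> real) \<Rightarrow> real \<Rightarrow> real" where
  "ecdf N w c = (\<Sum>j<N. if w j \<le> c then 1 else 0) / real N"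

lemma mono_ecdf: "mono (ecdf N w)"
  unfolding ecdf_def by (intro monoI divide_right_mono sum_mono) auto

lemma ecdf_eq_0:
  assumes "c < - (\<Sum>j<N. \<bar>w j\<bar>)"
  shows "ecdf N w c = 0"
proof -
  have "\<not> w j \<le> c" if "j < N" for j
    using that assms member_le_sum[of j "{..<N}" "\<lambda>j. \<bar>w j\<bar>"] by auto
  then show ?thesis by (simp add: ecdf_def)
qed

lemma ecdf_eq_1:
  assumes "0 < N" and "(\<Sum>j<N. \<bar>w j\<bar>) \<le> c"
  shows "ecdf N w c = 1"
proof -
  have "w j \<le> c" if "j < N" for j
    using that assms member_le_sum[of j "{..<N}" "\<lambda>j. \<bar>w j\<bar>"] by auto
  then show ?thesis using assms(1) by (simp add: ecdf_def)
qed

lemma bdd_below_ecdf_level: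
  assumes "0 < p"
  shows "bdd_below {c. p \<le> ecdf N w c}"
proof (rule bdd_belowI)
  show "- (\<Sum>j<N. \<bar>w j\<bar>) \<le> c" if "c \<in> {c. p \<le> ecdf N w c}" for c
    using that assms ecdf_eq_0[where c = c and N = N and w = w] by force
qed

lemma ecdf_shift: "ecdf N (\<lambda>j. w j - s) (c - s) = ecdf N w c"
  by (simp add: ecdf_def)

lemma borel_measurable_ecdf [measurable]:
  assumes [measurable]: "\<And>j. V j \<in> borel_measurable M"
  shows "(\<lambda>\<omega>. ecdf N (\<lambda>j. V j \<omega>) c) \<in> borel_measurable M"
  unfolding ecdf_def by measurable

lemma ecdf_quantile_tails:
  assumes "0 < N" "0 < p" "p < 1"
    and "p \<le> ecdf N w x" "ecdf N w y < 1 - p"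
    and "t < quantile (ecdf N w) p \<or> quantile (ecdf N w) (1 - p) < t"
  shows "t < x \<or> y < t"
proof -
  have "quantile (ecdf N w) p \<le> x"
    using assms by (intro quantile_le bdd_below_ecdf_level)
  moreover have "y \<le> quantile (ecdf N w) (1 - p)"
    using assms ecdf_eq_1[OF \<open>0 < N\<close> order.refl]
    by (intro quantile_ge[OF mono_ecdf, where c = "\<Sum>j<N. \<bar>w j\<bar>"]) auto
  ultimately show ?thesis using assms(6) by auto
qed

lemma shifted_ecdf_quantile_tails:
  assumes "0 < N" "0 < \<tau>" "\<tau> < \<tau>'" "\<tau>' < 1"
    and "\<bar>ecdf N v x - \<tau>'/2\<bar> \<le> (\<tau>' - \<tau>)/4"
    and "\<bar>ecdf N v y - (1 - \<tau>'/2)\<bar> \<le> (\<tau>' - \<tau>)/4"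
    and rej: "z - s < quantile (ecdf N (\<lambda>j. v j - s)) (\<tau>/2)
      \<or> quantile (ecdf N (\<lambda>j. v j - s)) (1 - \<tau>/2) < z - s"
  shows "z < x \<or> y < z"
proof -
  have "\<tau>/2 \<le> ecdf N v x" and "ecdf N v y < 1 - \<tau>/2"
    using assms(3,5,6) by argo+
  then have lo: "\<tau>/2 \<le> ecdf N (\<lambda>j. v j - s) (x - s)"
    and hi: "ecdf N (\<lambda>j. v j - s) (y - s) < 1 - \<tau>/2"
    by (simp_all add: ecdf_shift)
  have "z - s < x - s \<or> y - s < z - s"
    by (rule ecdf_quantile_tails[OF \<open>0 < N\<close> _ _ lo hi rej]) (use assms(2-4) in simp_all)
  then show ?thesis by auto
qed

lemma Limsup_ereal_le_of_null_excess:
  assumes "eventually (\<lambda>N. f N \<le> b + g N) sequentially" and "g \<longlonglongrightarrow> 0"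
  shows "limsup (\<lambda>N. ereal (f N)) \<le> ereal b"
proof -
  have "limsup (\<lambda>N. ereal (f N)) \<le> limsup (\<lambda>N. ereal (b + g N))"
    using assms(1) by (intro Limsup_mono) (auto elim: eventually_mono)
  also have "\<dots> = ereal b"
    using tendsto_add[OF tendsto_const assms(2), of b] by (intro lim_imp_Limsup) auto
  finally show ?thesis .
qed

lemma shifted_ecdf_test_asymptotic_level:
  fixes M :: "'a measure" and Z :: "'a \<Rightarrow> real" and V S :: "nat \<Rightarrow> 'a \<Rightarrow> real"
    and stat :: "nat \<Rightarrow> 'a \<Rightarrow> real" and Fh :: "nat \<Rightarrow> 'a \<Rightarrow> real \<Rightarrow> real"
  assumes "prob_space M"
    and [measurable]: "Z \<in> borel_measurable M" "\<And>j. V j \<in> borel_measurable M"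
    and F_quantile: "\<And>q. 0 < q \<Longrightarrow> q < 1 \<Longrightarrow> F (quantile F q) = q"
    and ecdf_conv: "\<And>c. conv_prob M (\<lambda>N \<omega>. ecdf N (\<lambda>j. V j \<omega>) c) (F c)"
    and level: "\<And>\<tau>. 0 < \<tau> \<Longrightarrow> \<tau> < 1 \<Longrightarrow>
      measure M ({\<omega>\<in>space M. Z \<omega> \<le> quantile F (\<tau>/2)}
               \<union> {\<omega>\<in>space M. Z \<omega> > quantile F (1 - \<tau>/2)}) \<le> \<tau>"
    and stat: "\<And>N \<omega>. 0 < N \<Longrightarrow> stat N \<omega> = Z \<omega> - S N \<omega>"
    and Fh: "\<And>N \<omega>. 0 < N \<Longrightarrow> Fh N \<omega> = ecdf N (\<lambda>j. V j \<omega> - S N \<omega>)"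
    and \<tau>: "0 < \<tau>" "\<tau> < 1"
  shows "limsup (\<lambda>N. ereal (measure M {\<omega>\<in>space M.
           stat N \<omega> < quantile (Fh N \<omega>) (\<tau>/2) \<or> stat N \<omega> > quantile (Fh N \<omega>) (1 - \<tau>/2)}))
         \<le> ereal \<tau>"
proof -
  interpret prob_space M by fact
  define R where "R N = {\<omega>\<in>space M.
    stat N \<omega> < quantile (Fh N \<omega>) (\<tau>/2) \<or> stat N \<omega> > quantile (Fh N \<omega>) (1 - \<tau>/2)}" for N
  have bound: "limsup (\<lambda>N. ereal (measure M (R N))) \<le> ereal \<tau>'" if "\<tau> < \<tau>'" "\<tau>' < 1" for \<tau>'
  proof -
    define x y where "x = quantile F (\<tau>'/2)" and "y = quantile F (1 - \<tau>'/2)"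
    define e where "e = (\<tau>' - \<tau>) / 4"
    have "0 < e" using that by (simp add: e_def)
    define E where "E = {\<omega>\<in>space M. Z \<omega> \<le> x} \<union> {\<omega>\<in>space M. Z \<omega> > y}"
    define D where "D c N = {\<omega>\<in>space M. e < \<bar>ecdf N (\<lambda>j. V j \<omega>) c - F c\<bar>}" for c N
    have Fx: "F x = \<tau>'/2" and Fy: "F y = 1 - \<tau>'/2"
      using \<tau> that unfolding x_def y_def by (simp_all add: F_quantile)
    have cover: "R N \<subseteq> E \<union> D x N \<union> D y N" if "0 < N" for N
    proof
      fix \<omega> assume R: "\<omega> \<in> R N"
      show "\<omega> \<in> E \<union> D x N \<union> D y N"
      proof (cases "\<omega> \<in> D x N \<union> D y N")
        case False
        then have "\<bar>ecdf N (\<lambda>j. V j \<omega>) x - \<tau>'/2\<bar> \<le> (\<tau>' - \<tau>)/4"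
          and "\<bar>ecdf N (\<lambda>j. V j \<omega>) y - (1 - \<tau>'/2)\<bar> \<le> (\<tau>' - \<tau>)/4"
          using R by (auto simp: D_def R_def Fx Fy e_def)
        moreover have "Z \<omega> - S N \<omega> < quantile (ecdf N (\<lambda>j. V j \<omega> - S N \<omega>)) (\<tau>/2)
          \<or> quantile (ecdf N (\<lambda>j. V j \<omega> - S N \<omega>)) (1 - \<tau>/2) < Z \<omega> - S N \<omega>"
          using R \<open>0 < N\<close> by (simp add: R_def stat Fh)
        ultimately have "Z \<omega> < x \<or> y < Z \<omega>"
          by (rule shifted_ecdf_quantile_tails
              [OF \<open>0 < N\<close> \<tau>(1) \<open>\<tau> < \<tau>'\<close> \<open>\<tau>' < 1\<close>])
        moreover have "\<omega> \<in> space M" using R by (simp add: R_def)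
        ultimately show ?thesis by (auto simp: E_def)
      qed blast
    qed
    have "measure M (R N) \<le> \<tau>' + (measure M (D x N) + measure M (D y N))" if "0 < N" for N
    proof (cases "R N \<in> sets M")
      case True
      have "measure M (R N) \<le> measure M (E \<union> D x N \<union> D y N)"
        using cover[OF that] True by (intro finite_measure_mono) (auto simp: E_def D_def)
      also have "\<dots> \<le> measure M E + measure M (D x N) + measure M (D y N)"
        by (intro order.trans[OF measure_Un_le] add_right_mono measure_Un_le) (auto simp: E_def D_def)
      also have "measure M E \<le> \<tau>'"
        using level \<tau> \<open>\<tau> < \<tau>'\<close> \<open>\<tau>' < 1\<close> by (simp add: E_def x_def y_def)
      finally show ?thesis by simp
    qed (use \<open>\<tau> < \<tau>'\<close> \<tau> in \<open>simp add: measure_notin_sets\<close>)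
    moreover have "(\<lambda>N. measure M (D x N) + measure M (D y N)) \<longlonglongrightarrow> 0"
      using ecdf_conv \<open>0 < e\<close> unfolding conv_prob_def D_def by (intro tendsto_add_zero) simp_all
    ultimately show ?thesis
      by (intro Limsup_ereal_le_of_null_excess eventually_sequentiallyI[of 1]) auto
  qed
  have "limsup (\<lambda>N. ereal (measure M (R N))) \<le> ereal \<tau>"
  proof (rule dense_ge_bounded)
    show "ereal \<tau> < 1" using \<tau> by simp
    show "limsup (\<lambda>N. ereal (measure M (R N))) \<le> w" if "ereal \<tau> < w" "w < 1" for w
      using that bound by (cases w) auto
  qed
  then show ?thesis by (simp add: R_def)
qed

theorem proposition2:
  fixes M :: "'a measure" and I1 :: "'u set" and ctrl :: "nat \<Rightarrow> 'u"
    and tstar T :: nat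
    and alpha_it :: "'u \<Rightarrow> nat \<Rightarrow> real"
    and theta :: "'u \<Rightarrow> 'a \<Rightarrow> real" and gamma :: "nat \<Rightarrow> 'a \<Rightarrow> real"
    and eta :: "'u \<Rightarrow> nat \<Rightarrow> 'a \<Rightarrow> real"
    and F :: "real \<Rightarrow> real" and alpha0 :: real
  assumes P: "prob_space M"
    and I1_fin: "finite I1" and N1_pos: "card I1 \<ge> 1"
    and ctrl_inj: "inj ctrl" and ctrl_disj: "range ctrl \<inter> I1 = {}"
    and tstar_pos: "1 \<le> tstar" and tstar_lt: "tstar < T"
  defines "Y \<equiv> \<lambda>i t \<omega>. (if i \<in> I1 \<and> t \<in> {tstar<..T} then alpha_it i t else 0)
                      + theta i \<omega> + gamma t \<omega> + eta i t \<omega>"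
  defines "W \<equiv> \<lambda>i \<omega>. nabla tstar T (\<lambda>t. eta i t \<omega>)"
    and "U \<equiv> I1 \<union> range ctrl"
  assumes eta_meas: "\<forall>i\<in>U. \<forall>t\<in>{1..T}. eta i t \<in> borel_measurable M"
    and A1_i: "\<forall>i\<in>U. integral\<^sup>L M (W i) = 0"
    and A1_ii_dist: "\<forall>i\<in>U. \<forall>j\<in>U. distr M borel (W i) = distr M borel (W j)"
    and A1_ii_cdf: "\<forall>i\<in>U. \<forall>c. measure M {\<omega>\<in>space M. W i \<omega> \<le> c} = F c"
    and A1_ii_cont: "continuous_on UNIV F"
    and A1_ii_mom: "\<forall>i\<in>U. integrable M (\<lambda>\<omega>. (W i \<omega>)\<^sup>2)"
    and A1_iii_mean: "conv_prob M (\<lambda>N0 \<omega>. (\<Sum>j<N0. W (ctrl j) \<omega>) / real N0) 0"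
    and A1_iii_cdf: "\<forall>c. conv_prob M
             (\<lambda>N0 \<omega>. (\<Sum>j<N0. if W (ctrl j) \<omega> \<le> c then 1 else 0) / real N0) (F c)"
    and A2: "\<forall>\<tau>\<in>{0<..<1::real}.
       measure M ({\<omega>\<in>space M. (\<Sum>i\<in>I1. W i \<omega>) / real (card I1) \<le> quantile F (\<tau>/2)}
                \<union> {\<omega>\<in>space M. (\<Sum>i\<in>I1. W i \<omega>) / real (card I1) > quantile F (1 - \<tau>/2)})
       \<le> \<tau>"
  defines "dY \<equiv> \<lambda>i \<omega>. nabla tstar T (\<lambda>t. Y i t \<omega>)"
  defines "alpha_hat \<equiv> \<lambda>N0 \<omega>. (\<Sum>i\<in>I1. dY i \<omega>) / real (card I1)
                             - (\<Sum>j<N0. dY (ctrl j) \<omega>) / real N0"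
  defines "W_hat \<equiv> \<lambda>N0 j \<omega>. dY (ctrl j) \<omega> - (\<Sum>k<N0. dY (ctrl k) \<omega>) / real N0"
  defines "F_hat \<equiv> \<lambda>N0 \<omega> c. (\<Sum>j<N0. if W_hat N0 j \<omega> \<le> c then 1 else 0) / real N0"
  assumes H0: "alpha0 = (\<Sum>i\<in>I1. \<Sum>t\<in>{tstar<..T}. alpha_it i t)
                        / (real (card I1) * real (T - tstar))"
  shows "\<forall>\<tau>\<in>{0<..<1::real}.
     limsup (\<lambda>N0. ereal (measure M {\<omega>\<in>space M.
         alpha_hat N0 \<omega> - alpha0 < quantile (F_hat N0 \<omega>) (\<tau>/2)
       \<or> alpha_hat N0 \<omega> - alpha0 > quantile (F_hat N0 \<omega>) (1 - \<tau>/2)}))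
     \<le> ereal \<tau>"
proof (intro ballI)
  \<comment> \<open>The centring cancels exactly.\<close>
  fix \<tau> :: real assume \<tau>: "\<tau> \<in> {0<..<1}"
  interpret prob_space M by (rule P)
  obtain i0 where "i0 \<in> I1" using N1_pos by fastforce
  have W_meas: "W i \<in> borel_measurable M" if "i \<in> U" for i
    unfolding W_def using eta_meas that tstar_lt by (intro borel_measurable_nabla) auto
  define gam where "gam \<omega> = nabla tstar T (\<lambda>t. gamma t \<omega>)" for \<omega>
  define a where "a i = (if i \<in> I1 then (\<Sum>t\<in>{tstar<..T}. alpha_it i t) / real (T - tstar) else 0)" for i
  define Wb where "Wb N \<omega> = (\<Sum>j<N. W (ctrl j) \<omega>) / real N" for N \<omega>
  have dY_eq: "dY i \<omega> = a i + gam \<omega> + W i \<omega>" for i \<omega>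
    unfolding dY_def Y_def W_def gam_def a_def by (rule nabla_did_outcome[OF tstar_pos tstar_lt])
  have a_ctrl: "a (ctrl j) = 0" for j
    using ctrl_disj by (auto simp: a_def)
  have "(\<Sum>i\<in>I1. a i) / real (card I1) = alpha0"
    by (simp add: H0 a_def sum_divide_distrib[symmetric] mult.commute)
  then have stat: "alpha_hat N \<omega> - alpha0 = (\<Sum>i\<in>I1. W i \<omega>) / real (card I1) - Wb N \<omega>"
    if "0 < N" for N \<omega>
    using that N1_pos by (simp add: alpha_hat_def Wb_def dY_eq a_ctrl sum.distrib add_divide_distrib)
  have F_hat: "F_hat N \<omega> = ecdf N (\<lambda>j. W (ctrl j) \<omega> - Wb N \<omega>)" if "0 < N" for N \<omega>
    using that
    by (simp add: F_hat_def W_hat_def ecdf_def fun_eq_iff Wb_def dY_eq a_ctrl sum.distrib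
        add_divide_distrib)
  have F_cdf: "F = cdf (distr M borel (W i0))"
    using W_meas A1_ii_cdf \<open>i0 \<in> I1\<close> by (auto simp: U_def cdf_def measure_distr vimage_def Int_def
      conj_commute)
  have "real_distribution (distr M borel (W i0))"
    using W_meas \<open>i0 \<in> I1\<close> by (simp add: U_def)
  then have F_quantile: "F (quantile F q) = q" if "0 < q" "q < 1" for q
    using A1_ii_cont that unfolding F_cdf by (rule quantile_continuous_cdf)
  show "limsup (\<lambda>N0. ereal (measure M {\<omega>\<in>space M.
         alpha_hat N0 \<omega> - alpha0 < quantile (F_hat N0 \<omega>) (\<tau>/2)
       \<or> alpha_hat N0 \<omega> - alpha0 > quantile (F_hat N0 \<omega>) (1 - \<tau>/2)})) \<le> ereal \<tau>"
  proof (rule shifted_ecdf_test_asymptotic_level[OF P _ _ F_quantile _ _ stat F_hat])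
    show "(\<lambda>\<omega>. (\<Sum>i\<in>I1. W i \<omega>) / real (card I1)) \<in> borel_measurable M"
      using W_meas by (intro borel_measurable_divide borel_measurable_sum borel_measurable_const)
        (auto simp: U_def)
    show "W (ctrl j) \<in> borel_measurable M" for j
      using W_meas by (simp add: U_def)
    show "conv_prob M (\<lambda>N \<omega>. ecdf N (\<lambda>j. W (ctrl j) \<omega>) c) (F c)" for c
      using A1_iii_cdf by (simp add: ecdf_def)
  qed (use \<tau> A2 in auto)
qed

end
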